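(* Let $S=\{(x_i,y_i)\}_{i=1}^n$ be a training set, $\{f_\theta\}$ a parameterized family of classifiers, $1\le k\le n$, and let $\hat\theta\in\arg\min_\theta L_{\textrm{close-}k}(\{\ell(y_i,f_\theta(x_i))\}_{i=1}^n)$. Then $$L_{0-1}(\hat\theta)\le \min_\theta L_{0-1}(\{(y_i,f_\theta(x_i))\}_{i=1}^n) + k - 1,$$ where $L_{0-1}(\theta)$ denotes the number of training examples misclassified by $f_\theta$.
   Context: Binary classification with labels $y\in\{-1,+1\}$ and real-valued predictions. An individual loss $\ell(y,f(x))\ge 0$ comes with a threshold $T$ such that an example is correctly classified iff its individual loss is below $T$ (e.g. logistic loss with $T=\log 2$, hinge loss with $T=1$). Given individual losses $\ell_1,\dots,\ell_n$, let $\ell_{[i]}$ be the individual loss with the $i$-th smallest value of $|\ell_j-T|$. For a constant $M$ at least as large as every individual loss that occurs, the close-$k$ aggregate loss is $L_{\textrm{close-}k}(\{\ell_i\})=\sum_{i=1}^n c_i$ with $c_i=\ell_{[i]}$ if $i\le k$, $c_i=0$ if $i>k$ and $\ell_{[i]}$ is correctly classified, and $c_i=M$ if $i>k$ and $\ell_{[i]}$ is incorrectly classified. $L_{0-1}(\{(y_i,f_\theta(x_i))\})$ is the number of $i$ with $y_i\ne\mathrm{sgn} f_\theta(x_i)$. *)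

theory Defs
  imports Complex_Main
begin

text \<open>The losses are ordered by increasing distance to T (ties broken
  stably by original position, via sort_key); the first k keep their own value,
  the remaining ones contribute 0 if correctly classified (loss below T) and M otherwise.\<close>
definition close_k :: "real \<Rightarrow> real \<Rightarrow> nat \<Rightarrow> real list \<Rightarrow> real" where
  "close_k T M k ls =
     (let s = sort_key (\<lambda>l. \<bar>l - T\<bar>) ls
      in sum_list (map (\<lambda>(i, l). if i < k then l else if l < T then 0 else M)
                      (enumerate 0 s)))"

definition L01 :: "nat \<Rightarrow> ('x \<Rightarrow> real) \<Rightarrow> (nat \<Rightarrow> 'x) \<Rightarrow> (nat \<Rightarrow> real) \<Rightarrow> nat" where
  "L01 n g x y = card {i. i < n \<and> y i \<noteq> sgn (g (x i))}"

end

theory Submission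
  imports Defs
begin

text \<open>The sorting by distance to T only decides which k losses are kept at face value; every
  other loss l contributes M if l \<ge> T and 0 otherwise. So close_k equals M e, where e counts the
  misclassified examples, plus at most k correction terms l - M [l \<ge> T], each lying in [T - M, T).
  For a minimiser \<theta>h and any \<theta> this gives
  M e(\<theta>h) - (M - T) k \<le> close_k(\<theta>h) \<le> close_k(\<theta>) < M e(\<theta>) + T k, hence e(\<theta>h) < e(\<theta>) + k.\<close>

lemma sum_list_enumerate_split:
  fixes g h :: "'a \<Rightarrow> 'b::monoid_add"
  shows "sum_list (map (\<lambda>(i, l). if i < k then g l else h l) (enumerate j xs))
       = sum_list (map g (take (k - j) xs)) + sum_list (map h (drop (k - j) xs))"
proof (induction xs arbitrary: j)
  case (Cons a xs)
  show ?case
  proof (cases "j < k")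
    case True
    then have "k - j = Suc (k - Suc j)" by simp
    with True Cons.IH[of "Suc j"] show ?thesis by (simp add: add.assoc)
  next
    case False
    with Cons.IH[of "Suc j"] show ?thesis by simp
  qed
qed simp

lemma sum_list_penalty:
  fixes T M :: real
  shows "(\<Sum>l\<leftarrow>ls. if l < T then 0 else M) = M * real (length (filter (\<lambda>l. T \<le> l) ls))"
  by (induction ls) (auto simp: algebra_simps)

lemma close_k_eq_penalty_plus_correction:
  "close_k T M k ls = M * real (length (filter (\<lambda>l. T \<le> l) ls))
     + (\<Sum>l\<leftarrow>take k (sort_key (\<lambda>l. \<bar>l - T\<bar>) ls). l - (if l < T then 0 else M))"
proof -
  define s where "s = sort_key (\<lambda>l. \<bar>l - T\<bar>) ls"
  define p where "p l = (if l < T then 0 else M)" for l :: real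
  have "close_k T M k ls = (\<Sum>l\<leftarrow>take k s. l) + (\<Sum>l\<leftarrow>drop k s. p l)"
    using sum_list_enumerate_split[of k "\<lambda>l. l" p 0 s]
    unfolding close_k_def s_def p_def Let_def by simp
  also have "\<dots> = (\<Sum>l\<leftarrow>s. p l) + (\<Sum>l\<leftarrow>take k s. l - p l)"
    by (subst append_take_drop_id[of k s, symmetric], unfold map_append sum_list_append)
      (simp add: sum_list_subtractf)
  also have "(\<Sum>l\<leftarrow>s. p l) = M * real (length (filter (\<lambda>l. T \<le> l) ls))"
    unfolding p_def sum_list_penalty s_def filter_sort length_sort ..
  finally show ?thesis
    unfolding s_def p_def .
qed

lemma close_k_lower_bound:
  assumes nonneg: "\<forall>l\<in>set ls. 0 \<le> l" and "T \<le> M"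
  shows "M * real (length (filter (\<lambda>l. T \<le> l) ls)) - (M - T) * real k \<le> close_k T M k ls"
proof -
  define t where "t = take k (sort_key (\<lambda>l. \<bar>l - T\<bar>) ls)"
  have "set t \<subseteq> set ls"
    unfolding t_def by (metis set_sort set_take_subset)
  have "(T - M) * real k \<le> (T - M) * real (length t)"
    using \<open>T \<le> M\<close> by (intro mult_left_mono_neg) (auto simp: t_def)
  also have "\<dots> = (\<Sum>l\<leftarrow>t. T - M)"
    by (simp add: sum_list_triv)
  also have "\<dots> \<le> (\<Sum>l\<leftarrow>t. l - (if l < T then 0 else M))"
    using nonneg \<open>T \<le> M\<close> \<open>set t \<subseteq> set ls\<close> by (intro sum_list_mono) (auto dest!: subsetD)
  finally show ?thesis
    unfolding close_k_eq_penalty_plus_correction t_def by (simp add: algebra_simps)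
qed

lemma close_k_upper_bound:
  assumes bounded: "\<forall>l\<in>set ls. l \<le> M" and "0 < T" and "0 < k" and "ls \<noteq> []"
  shows "close_k T M k ls < M * real (length (filter (\<lambda>l. T \<le> l) ls)) + T * real k"
proof -
  define t where "t = take k (sort_key (\<lambda>l. \<bar>l - T\<bar>) ls)"
  have "set t \<subseteq> set ls"
    unfolding t_def by (metis set_sort set_take_subset)
  have "t \<noteq> []"
    using \<open>0 < k\<close> \<open>ls \<noteq> []\<close> unfolding t_def
    by (metis length_0_conv length_sort take_eq_Nil not_gr0)
  then have "(\<Sum>l\<leftarrow>t. l - (if l < T then 0 else M)) < (\<Sum>l\<leftarrow>t. T)"
    using bounded \<open>0 < T\<close> \<open>set t \<subseteq> set ls\<close>
    by (intro sum_list_strict_mono) (auto dest!: subsetD)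
  also have "\<dots> = T * real (length t)"
    by (simp add: sum_list_triv)
  also have "\<dots> \<le> T * real k"
    using \<open>0 < T\<close> by (intro mult_left_mono) (auto simp: t_def)
  finally show ?thesis
    unfolding close_k_eq_penalty_plus_correction t_def by simp
qed

lemma close_k_minimizer_misclassification_bound:
  assumes bounded: "\<forall>l\<in>set ls. 0 \<le> l \<and> l \<le> M" "\<forall>l\<in>set ls'. 0 \<le> l \<and> l \<le> M"
    and "0 < T" and "0 < k" and "ls' \<noteq> []"
    and minimal: "close_k T M k ls \<le> close_k T M k ls'"
  shows "length (filter (\<lambda>l. T \<le> l) ls) < length (filter (\<lambda>l. T \<le> l) ls') + k"
proof (cases "\<exists>l\<in>set ls. T \<le> l")
  case True
  then have "T \<le> M"
    using bounded(1) by force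
  have "M * real (length (filter (\<lambda>l. T \<le> l) ls)) - (M - T) * real k \<le> close_k T M k ls"
    using bounded(1) \<open>T \<le> M\<close> by (intro close_k_lower_bound) auto
  also have "\<dots> \<le> close_k T M k ls'"
    by (fact minimal)
  also have "\<dots> < M * real (length (filter (\<lambda>l. T \<le> l) ls')) + T * real k"
    using bounded(2) \<open>0 < T\<close> \<open>0 < k\<close> \<open>ls' \<noteq> []\<close> by (intro close_k_upper_bound) auto
  finally have "M * real (length (filter (\<lambda>l. T \<le> l) ls))
      < M * real (length (filter (\<lambda>l. T \<le> l) ls') + k)"
    by (simp add: algebra_simps)
  then show ?thesis
    using \<open>0 < T\<close> \<open>T \<le> M\<close> by (simp add: mult_less_cancel_left)
next
  case False
  then show ?thesis
    using \<open>0 < k\<close> by (simp add: filter_False)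
qed

lemma L01_le: "L01 n g x y \<le> n"
proof -
  have "L01 n g x y \<le> card {..<n}"
    unfolding L01_def by (rule card_mono) auto
  then show ?thesis
    by simp
qed

lemma L01_eq_count_losses_above_threshold:
  fixes loss :: "real \<Rightarrow> real \<Rightarrow> real"
  assumes labels: "\<forall>i<n. y i \<in> {-1, 1}"
    and threshold: "\<forall>c\<in>{-1, 1}. \<forall>z. loss c z < T \<longleftrightarrow> c = sgn z"
  shows "L01 n g x y = length (filter (\<lambda>l. T \<le> l) (map (\<lambda>i. loss (y i) (g (x i))) [0..<n]))"
proof -
  define ls where "ls = map (\<lambda>i. loss (y i) (g (x i))) [0..<n]"
  have "y i \<noteq> sgn (g (x i)) \<longleftrightarrow> T \<le> ls ! i" if "i < n" for i
    using bspec[OF threshold, of "y i"] labels that by (simp add: ls_def not_less[symmetric])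
  then have "{i. i < n \<and> y i \<noteq> sgn (g (x i))} = {i. i < length ls \<and> T \<le> ls ! i}"
    by (intro Collect_cong conj_cong) (simp_all add: ls_def)
  then show ?thesis
    unfolding L01_def length_filter_conv_card ls_def by (simp only:)
qed

theorem lemma2:
  fixes x :: "nat \<Rightarrow> 'x" and y :: "nat \<Rightarrow> real"
    and f :: "'p \<Rightarrow> 'x \<Rightarrow> real"
    and loss :: "real \<Rightarrow> real \<Rightarrow> real"
    and T M :: real and n k :: nat and \<theta>h :: 'p
  assumes labels: "\<forall>i<n. y i \<in> {-1, 1}"
    and loss_nonneg: "\<forall>c\<in>{-1, 1}. \<forall>z. 0 \<le> loss c z"
    and threshold: "\<forall>c\<in>{-1, 1}. \<forall>z. loss c z < T \<longleftrightarrow> c = sgn z"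
    and M_bound: "\<forall>\<theta>. \<forall>i<n. loss (y i) (f \<theta> (x i)) \<le> M"
    and k_pos: "1 \<le> k" and k_le: "k \<le> n"
    and argmin: "\<forall>\<theta>. close_k T M k (map (\<lambda>i. loss (y i) (f \<theta>h (x i))) [0..<n])
                      \<le> close_k T M k (map (\<lambda>i. loss (y i) (f \<theta> (x i))) [0..<n])"
  shows "L01 n (f \<theta>h) x y \<le> Min (range (\<lambda>\<theta>. L01 n (f \<theta>) x y)) + k - 1"
proof -
  define losses where "losses \<theta> = map (\<lambda>i. loss (y i) (f \<theta> (x i))) [0..<n]" for \<theta>
  have "0 < T"
    using threshold loss_nonneg by (metis insertCI order_le_less_trans sgn_one)
  have bounded: "\<forall>l\<in>set (losses \<theta>). 0 \<le> l \<and> l \<le> M" for \<theta>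
    using labels loss_nonneg M_bound unfolding losses_def by auto
  have L01_eq: "L01 n (f \<theta>) x y = length (filter (\<lambda>l. T \<le> l) (losses \<theta>))" for \<theta>
    unfolding losses_def by (rule L01_eq_count_losses_above_threshold[OF labels threshold])
  have gap: "L01 n (f \<theta>h) x y < L01 n (f \<theta>) x y + k" for \<theta>
    unfolding L01_eq
  proof (rule close_k_minimizer_misclassification_bound[OF bounded bounded \<open>0 < T\<close>])
    show "0 < k" and "losses \<theta> \<noteq> []"
      using k_pos k_le by (auto simp: losses_def)
    show "close_k T M k (losses \<theta>h) \<le> close_k T M k (losses \<theta>)"
      using argmin by (simp add: losses_def)
  qed
  have "finite (range (\<lambda>\<theta>. L01 n (f \<theta>) x y))"
    by (rule finite_subset[of _ "{..n}"]) (auto simp: L01_le)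
  then have "Min (range (\<lambda>\<theta>. L01 n (f \<theta>) x y)) \<in> range (\<lambda>\<theta>. L01 n (f \<theta>) x y)"
    by (rule Min_in) simp
  then obtain \<theta>s where "Min (range (\<lambda>\<theta>. L01 n (f \<theta>) x y)) = L01 n (f \<theta>s) x y"
    by blast
  with gap[of \<theta>s] show ?thesis
    by simp
qed

end
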